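(* Let $\mathcal{X}\subseteq\mathbb{R}^d$ be a nonempty closed convex bounded set with $R\ge\max_{x,y\in\mathcal{X}}\|x-y\|$, and let $F\colon\mathcal{X}\to\mathbb{R}^d$ be $\beta$-smooth with respect to the $\ell_2$-norm. Consider the iterates $x_t,z_t$ and step sizes $\gamma_t$ of Algorithm AdaPEG (described in the context), where $\widehat{F(x_t)}\in\mathbb{R}^d$ are the oracle answers, and let $\xi_t=F(x_t)-\widehat{F(x_t)}$. Then \[\left(\frac12\frac{R^2}{\eta}+2\eta\right)\sqrt{\sum_{t=1}^T\left\|\widehat{F(x_t)}-\widehat{F(x_{t-1})}\right\|^2}-\frac12\sum_{t=1}^T\gamma_{t-1}\left(\|x_t-z_{t-1}\|^2+\|x_{t-1}-z_{t-1}\|^2\right)\] \[\le\beta\left(\frac12\frac{R^2}{\eta}+2\eta\right)\left((2+\sqrt2)R+4\eta\right)+\left(\sqrt2\frac{R^2}{\eta}+4\sqrt2\eta\right)\sqrt{\sum_{t=0}^T\|\xi_t\|^2}.\]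
   Context: $\|\cdot\|$ is the Euclidean norm; $\beta$-smooth: $\|F(x)-F(y)\|\le\beta\|x-y\|$ for all $x,y\in\mathcal{X}$. Algorithm AdaPEG: $x_0=z_0\in\mathcal{X}$, $\gamma_0\ge0$, $\eta>0$. For $t=1,\dots,T$: $x_t=\arg\min_{u\in\mathcal{X}}\{\langle\widehat{F(x_{t-1})},u\rangle+\tfrac12\gamma_{t-1}\|u-z_{t-1}\|^2\}$; $\gamma_t=\frac1\eta\sqrt{\eta^2\gamma_0^2+\sum_{s=1}^t\|\widehat{F(x_s)}-\widehat{F(x_{s-1})}\|^2}$; $z_t=\arg\min_{u\in\mathcal{X}}\{\langle\widehat{F(x_t)},u\rangle+\tfrac12\gamma_{t-1}\|u-z_{t-1}\|^2+\tfrac12(\gamma_t-\gamma_{t-1})\|u-x_t\|^2\}$. *)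

theory Defs
  imports "HOL-Analysis.Analysis"
begin

definition is_minimizer :: "'a set \<Rightarrow> ('a \<Rightarrow> real) \<Rightarrow> 'a \<Rightarrow> bool" where
  "is_minimizer X f x \<longleftrightarrow> x \<in> X \<and> (\<forall>u\<in>X. f x \<le> f u)"

end

theory Submission
  imports Defs
begin

(* Write g t for the norm of the t-th oracle increment and xi t for the oracle error at x t.
   Fix the threshold c = beta * (R + 2 eta) / eta and let k be the last round whose cumulative
   squared increments stay below (eta c)^2.  The increments up to round k contribute at most eta c
   to their l2-norm.  Round k + 1 is paid for with the diameter R, and from round k + 2 on the step
   sizes are at least c, so the negative term -1/2 * sum gamma (t - 1) * (...) absorbs, by Young's
   inequality, the movement of the iterates in those rounds.  What is left is the noise. *)

lemma Youngs_inequality_sqrt: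
  fixes p q c u :: real
  assumes "0 \<le> c" "0 \<le> u" "0 \<le> q" "p\<^sup>2 \<le> 2 * c * q"
  shows "p * sqrt u \<le> q + c / 2 * u"
proof (cases "c = 0")
  case True
  then show ?thesis using assms by simp
next
  case False
  have "0 \<le> (c * sqrt u - p)\<^sup>2" by simp
  also have "\<dots> = c\<^sup>2 * u - 2 * c * p * sqrt u + p\<^sup>2"
    using assms(2) by (simp add: power2_diff power_mult_distrib)
  also have "\<dots> \<le> c * (2 * (q + c / 2 * u - p * sqrt u))"
    using assms(4) by (simp add: algebra_simps power2_eq_square)
  finally show ?thesis
    using assms(1) False by (simp add: zero_le_mult_iff)
qed

lemma lipschitz_estimates_diff_le:
  fixes F :: "'a::real_normed_vector \<Rightarrow> 'b::real_normed_vector"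
  assumes "\<forall>u\<in>X. \<forall>v\<in>X. norm (F u - F v) \<le> \<beta> * norm (u - v)" "a \<in> X" "b \<in> X"
  shows "norm (p - q) \<le> \<beta> * norm (a - b) + (norm (F a - p) + norm (F b - q))"
proof -
  have "norm (p - q) \<le> norm (F a - F b) + norm (F a - p) + norm (F b - q)"
    using norm_triangle_ineq4[of "F a - F b" "F a - p"]
      norm_triangle_ineq[of "(F a - F b) - (F a - p)" "F b - q"]
    by (simp add: algebra_simps)
  then show ?thesis
    using assms by fastforce
qed

lemma power2_norm_diff_le:
  fixes a b z :: "'a::real_normed_vector"
  shows "(norm (a - b))\<^sup>2 \<le> 2 * ((norm (a - z))\<^sup>2 + (norm (b - z))\<^sup>2)"
proof -
  have "norm (a - b) \<le> norm (a - z) + norm (b - z)"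
    using norm_triangle_ineq4[of "a - z" "b - z"] by simp
  then have "(norm (a - b))\<^sup>2 \<le> (norm (a - z) + norm (b - z))\<^sup>2"
    by (simp add: power_mono)
  also have "\<dots> \<le> 2 * ((norm (a - z))\<^sup>2 + (norm (b - z))\<^sup>2)"
    using zero_le_power2[of "norm (a - z) - norm (b - z)"] by (simp add: power2_eq_square algebra_simps)
  finally show ?thesis .
qed

lemma L2_set_Un_le:
  assumes "finite A" "finite B"
  shows "L2_set f (A \<union> B) \<le> L2_set f A + L2_set f B"
proof -
  have "(\<Sum>i\<in>A \<union> B. (f i)\<^sup>2) \<le> (\<Sum>i\<in>A. (f i)\<^sup>2) + (\<Sum>i\<in>B. (f i)\<^sup>2)"
    using assms by (simp add: sum_Un sum_nonneg)
  then show ?thesis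
    unfolding L2_set_def
    by (meson order_trans real_sqrt_le_mono sqrt_add_le_add_sqrt sum_nonneg zero_le_power2)
qed

lemma L2_set_subset_mono:
  assumes "A \<subseteq> B" "finite B"
  shows "L2_set f A \<le> L2_set f B"
  unfolding L2_set_def using assms by (intro real_sqrt_le_mono sum_mono2) auto

lemma L2_set_add_shift_le:
  fixes f :: "nat \<Rightarrow> real"
  shows "L2_set (\<lambda>t. f t + f (t - 1)) {1..T} \<le> 2 * L2_set f {0..T}"
proof -
  have "L2_set (\<lambda>t. f (t - 1)) {1..T} = L2_set f ((\<lambda>t. t - 1) ` {1..T})"
    unfolding L2_set_def by (subst sum.reindex) (auto simp: inj_on_def)
  also have "\<dots> \<le> L2_set f {0..T}"
    by (rule L2_set_subset_mono) auto
  finally have "L2_set (\<lambda>t. f (t - 1)) {1..T} \<le> L2_set f {0..T}" .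
  moreover have "L2_set f {1..T} \<le> L2_set f {0..T}"
    by (rule L2_set_subset_mono) auto
  ultimately show ?thesis
    using L2_set_triangle_ineq[of f "\<lambda>t. f (t - 1)" "{1..T}"] by linarith
qed

lemma exists_last_partial_sum_le:
  fixes D :: "nat \<Rightarrow> real"
  assumes "0 \<le> M"
  obtains k where "k \<le> T" "(\<Sum>s=1..k. D s) \<le> M" "\<forall>t\<in>{k<..T}. M < (\<Sum>s=1..t. D s)"
proof -
  define K where "K = {t\<in>{0..T}. (\<Sum>s=1..t. D s) \<le> M}"
  have "0 \<in> K" "finite K" using assms by (auto simp: K_def)
  then have "Max K \<in> K" by (auto intro: Max_in)
  show thesis
  proof (rule that)
    show "Max K \<le> T" "(\<Sum>s=1..Max K. D s) \<le> M"
      using \<open>Max K \<in> K\<close> by (auto simp: K_def)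
    show "\<forall>t\<in>{Max K<..T}. M < (\<Sum>s=1..t. D s)"
    proof
      fix t assume t: "t \<in> {Max K<..T}"
      then have "t \<notin> K" using Max_ge[OF \<open>finite K\<close>] by fastforce
      then show "M < (\<Sum>s=1..t. D s)" using t by (auto simp: K_def)
    qed
  qed
qed

lemma adaptive_stepsize_threshold:
  fixes g \<gamma> :: "nat \<Rightarrow> real"
  assumes "0 < \<eta>" "0 \<le> c"
    and gamma_step: "\<forall>t\<in>{1..T}. \<gamma> t = 1 / \<eta> * sqrt (\<eta>\<^sup>2 * (\<gamma> 0)\<^sup>2 + (\<Sum>s=1..t. (g s)\<^sup>2))"
  obtains k where "k \<le> T" "L2_set g {1..k} \<le> \<eta> * c" "\<forall>t\<in>{Suc k<..T}. c \<le> \<gamma> (t - 1)"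
proof -
  obtain k where "k \<le> T" and head: "(\<Sum>s=1..k. (g s)\<^sup>2) \<le> (\<eta> * c)\<^sup>2"
    and tail: "\<forall>t\<in>{k<..T}. (\<eta> * c)\<^sup>2 < (\<Sum>s=1..t. (g s)\<^sup>2)"
    using exists_last_partial_sum_le[of "(\<eta> * c)\<^sup>2"] by auto
  show thesis
  proof (rule that)
    show "k \<le> T" by fact
    show "L2_set g {1..k} \<le> \<eta> * c"
      unfolding L2_set_def using real_sqrt_le_mono[OF head] assms(1,2) by simp
    show "\<forall>t\<in>{Suc k<..T}. c \<le> \<gamma> (t - 1)"
    proof
      fix t assume t: "t \<in> {Suc k<..T}"
      have "t - 1 \<in> {k<..T}" using t by auto
      then have "(\<eta> * c)\<^sup>2 \<le> \<eta>\<^sup>2 * (\<gamma> 0)\<^sup>2 + (\<Sum>s=1..t - 1. (g s)\<^sup>2)"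
        using tail by (intro add_increasing) (auto intro: less_imp_le)
      then have "1 / \<eta> * sqrt ((\<eta> * c)\<^sup>2)
          \<le> 1 / \<eta> * sqrt (\<eta>\<^sup>2 * (\<gamma> 0)\<^sup>2 + (\<Sum>s=1..t - 1. (g s)\<^sup>2))"
        using assms(1) by (intro mult_left_mono real_sqrt_le_mono) auto
      moreover have "t - 1 \<in> {1..T}" using t by auto
      ultimately show "c \<le> \<gamma> (t - 1)"
        using gamma_step assms(1,2) by simp
    qed
  qed
qed

lemma L2_set_tail_le:
  fixes g d e \<delta> :: "nat \<Rightarrow> real"
  assumes "0 \<le> \<beta>" "0 \<le> R"
    and g: "\<forall>t\<in>{k<..T}. 0 \<le> g t \<and> g t \<le> \<beta> * d t + e t"
    and d: "\<forall>t\<in>{k<..T}. \<bar>d t\<bar> \<le> R \<and> (d t)\<^sup>2 \<le> 2 * \<delta> t"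
  shows "L2_set g {k<..T}
         \<le> \<beta> * (R + sqrt 2 * sqrt (\<Sum>t\<in>{Suc k<..T}. \<delta> t)) + L2_set e {k<..T}"
proof -
  have "L2_set d {k<..T} \<le> R + sqrt 2 * sqrt (\<Sum>t\<in>{Suc k<..T}. \<delta> t)"
  proof (cases "k < T")
    case True
    have "L2_set d {Suc k<..T} \<le> sqrt (\<Sum>t\<in>{Suc k<..T}. 2 * \<delta> t)"
      unfolding L2_set_def using d by (intro real_sqrt_le_mono sum_mono) auto
    moreover have "L2_set d {Suc k} \<le> R"
      using d True by simp
    moreover have "{k<..T} = {Suc k} \<union> {Suc k<..T}"
      using True by auto
    ultimately show ?thesis
      using L2_set_Un_le[of "{Suc k}" "{Suc k<..T}" d]
      by (simp add: sum_distrib_left[symmetric] real_sqrt_mult)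
  next
    case False
    then show ?thesis using assms(2) by simp
  qed
  have "L2_set g {k<..T} \<le> L2_set (\<lambda>t. \<beta> * d t + e t) {k<..T}"
    using g by (intro L2_set_mono) auto
  also have "\<dots> \<le> \<beta> * L2_set d {k<..T} + L2_set e {k<..T}"
    using L2_set_triangle_ineq[of "\<lambda>t. \<beta> * d t" e] L2_set_right_distrib[OF assms(1), of d]
    by simp
  also have "\<dots> \<le> \<beta> * (R + sqrt 2 * sqrt (\<Sum>t\<in>{Suc k<..T}. \<delta> t)) + L2_set e {k<..T}"
    using \<open>L2_set d {k<..T} \<le> _\<close> assms(1) by (simp add: mult_left_mono)
  finally show ?thesis .
qed

lemma adaptive_stepsize_split:
  fixes g d e \<delta> \<gamma> :: "nat \<Rightarrow> real"
  assumes "0 < \<eta>" "0 \<le> \<beta>" "0 \<le> R" "0 \<le> \<gamma> 0" "0 \<le> c"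
    and gamma_step: "\<forall>t\<in>{1..T}. \<gamma> t = 1 / \<eta> * sqrt (\<eta>\<^sup>2 * (\<gamma> 0)\<^sup>2 + (\<Sum>s=1..t. (g s)\<^sup>2))"
    and g: "\<forall>t\<in>{1..T}. 0 \<le> g t \<and> g t \<le> \<beta> * d t + e t"
    and d: "\<forall>t\<in>{1..T}. \<bar>d t\<bar> \<le> R \<and> (d t)\<^sup>2 \<le> 2 * \<delta> t"
  obtains u where "0 \<le> u"
    and "L2_set g {1..T} \<le> \<eta> * c + \<beta> * R + \<beta> * sqrt 2 * sqrt u + L2_set e {1..T}"
    and "c * u \<le> (\<Sum>t=1..T. \<gamma> (t - 1) * \<delta> t)"
proof -
  obtain k where "k \<le> T" and head: "L2_set g {1..k} \<le> \<eta> * c"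
    and large_step: "\<forall>t\<in>{Suc k<..T}. c \<le> \<gamma> (t - 1)"
    using adaptive_stepsize_threshold[OF assms(1,5) gamma_step] by blast
  define u where "u = (\<Sum>t\<in>{Suc k<..T}. \<delta> t)"
  have delta_nonneg: "0 \<le> \<delta> t" if "t \<in> {1..T}" for t
  proof -
    have "(d t)\<^sup>2 \<le> 2 * \<delta> t" using d that by blast
    then show ?thesis using zero_le_power2[of "d t"] by linarith
  qed
  have gamma_nonneg: "0 \<le> \<gamma> t" if "t \<le> T" for t
    using that gamma_step assms(1,4)
    by (cases "t = 0") (auto intro!: divide_nonneg_pos add_nonneg_nonneg sum_nonneg)
  show thesis
  proof (rule that)
    show "0 \<le> u"
      unfolding u_def using delta_nonneg \<open>k \<le> T\<close> by (intro sum_nonneg) auto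
    have "{1..T} = {1..k} \<union> {k<..T}"
      using \<open>k \<le> T\<close> by auto
    then have "L2_set g {1..T} \<le> L2_set g {1..k} + L2_set g {k<..T}"
      using L2_set_Un_le[of "{1..k}" "{k<..T}" g] by simp
    also have "L2_set g {k<..T} \<le> \<beta> * (R + sqrt 2 * sqrt u) + L2_set e {1..T}"
      using L2_set_tail_le[OF assms(2,3), of k T g d e \<delta>] g d
        L2_set_subset_mono[of "{k<..T}" "{1..T}" e]
      unfolding u_def by fastforce
    finally show "L2_set g {1..T} \<le> \<eta> * c + \<beta> * R + \<beta> * sqrt 2 * sqrt u + L2_set e {1..T}"
      using head by (simp add: algebra_simps)
    have "c * u \<le> (\<Sum>t\<in>{Suc k<..T}. \<gamma> (t - 1) * \<delta> t)"
      unfolding u_def sum_distrib_left using large_step delta_nonneg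
      by (intro sum_mono mult_right_mono) auto
    also have "\<dots> \<le> (\<Sum>t=1..T. \<gamma> (t - 1) * \<delta> t)"
      using gamma_nonneg delta_nonneg by (intro sum_mono2) auto
    finally show "c * u \<le> (\<Sum>t=1..T. \<gamma> (t - 1) * \<delta> t)" .
  qed
qed

lemma adaptive_stepsize_increment_bound:
  fixes g d e \<delta> \<gamma> :: "nat \<Rightarrow> real"
  assumes "0 < \<eta>" "0 \<le> \<beta>" "0 \<le> R" "0 \<le> \<gamma> 0"
    and gamma_step: "\<forall>t\<in>{1..T}. \<gamma> t = 1 / \<eta> * sqrt (\<eta>\<^sup>2 * (\<gamma> 0)\<^sup>2 + (\<Sum>s=1..t. (g s)\<^sup>2))"
    and g: "\<forall>t\<in>{1..T}. 0 \<le> g t \<and> g t \<le> \<beta> * d t + e t"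
    and d: "\<forall>t\<in>{1..T}. \<bar>d t\<bar> \<le> R \<and> (d t)\<^sup>2 \<le> 2 * \<delta> t"
  shows "(1/2 * R\<^sup>2 / \<eta> + 2 * \<eta>) * L2_set g {1..T} - 1/2 * (\<Sum>t=1..T. \<gamma> (t - 1) * \<delta> t)
         \<le> \<beta> * (1/2 * R\<^sup>2 / \<eta> + 2 * \<eta>) * ((2 + sqrt 2) * R + 4 * \<eta>)
           + (1/2 * R\<^sup>2 / \<eta> + 2 * \<eta>) * L2_set e {1..T}"
proof -
  define A where "A = 1/2 * R\<^sup>2 / \<eta> + 2 * \<eta>"
  define c where "c = \<beta> * (R + 2 * \<eta>) / \<eta>"
  have "0 < A" "0 \<le> c"
    using assms(1-3) by (auto simp: A_def c_def add_nonneg_pos)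
  obtain u where "0 \<le> u"
    and increments: "L2_set g {1..T} \<le> \<eta> * c + \<beta> * R + \<beta> * sqrt 2 * sqrt u + L2_set e {1..T}"
    and weighted: "c * u \<le> (\<Sum>t=1..T. \<gamma> (t - 1) * \<delta> t)"
    using adaptive_stepsize_split[OF assms(1-4) \<open>0 \<le> c\<close> gamma_step g d] by blast
  have Young: "A * \<beta> * sqrt 2 * sqrt u \<le> A * \<beta> * (R + 2 * \<eta>) / 2 + c / 2 * u"
  proof (rule Youngs_inequality_sqrt)
    have "2 * A \<le> (R + 2 * \<eta>)\<^sup>2 / \<eta>"
      using assms(1,3) by (simp add: A_def field_simps power2_eq_square)
    have "(A * \<beta> * sqrt 2)\<^sup>2 = 2 * A * (A * \<beta>\<^sup>2)"
      by (simp add: power_mult_distrib power2_eq_square)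
    also have "\<dots> \<le> (R + 2 * \<eta>)\<^sup>2 / \<eta> * (A * \<beta>\<^sup>2)"
      using \<open>2 * A \<le> _\<close> \<open>0 < A\<close> by (intro mult_right_mono) auto
    also have "\<dots> = 2 * c * (A * \<beta> * (R + 2 * \<eta>) / 2)"
      using assms(1) by (simp add: c_def power2_eq_square)
    finally show "(A * \<beta> * sqrt 2)\<^sup>2 \<le> 2 * c * (A * \<beta> * (R + 2 * \<eta>) / 2)" .
  qed (use \<open>0 \<le> c\<close> \<open>0 \<le> u\<close> \<open>0 < A\<close> assms(1-3) in auto)
  have constants: "\<eta> * c + \<beta> * R + \<beta> * (R + 2 * \<eta>) / 2 \<le> \<beta> * ((2 + sqrt 2) * R + 4 * \<eta>)"
  proof -
    have "R \<le> sqrt 2 * R"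
      using assms(3) mult_right_mono[of 1 "sqrt 2" R] by simp
    then have "5/2 * R + 3 * \<eta> \<le> (2 + sqrt 2) * R + 4 * \<eta>"
      using assms(1,3) by (simp add: algebra_simps)
    have "\<eta> * c = \<beta> * (R + 2 * \<eta>)"
      using assms(1) by (simp add: c_def)
    then have "\<eta> * c + \<beta> * R + \<beta> * (R + 2 * \<eta>) / 2 = \<beta> * (5/2 * R + 3 * \<eta>)"
      by (simp add: field_simps)
    also have "\<dots> \<le> \<beta> * ((2 + sqrt 2) * R + 4 * \<eta>)"
      using \<open>5/2 * R + 3 * \<eta> \<le> _\<close> assms(2) by (rule mult_left_mono)
    finally show ?thesis .
  qed
  have "A * L2_set g {1..T} - 1/2 * (\<Sum>t=1..T. \<gamma> (t - 1) * \<delta> t)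
      \<le> A * (\<eta> * c + \<beta> * R + \<beta> * sqrt 2 * sqrt u + L2_set e {1..T}) - c / 2 * u"
    using mult_left_mono[OF increments less_imp_le[OF \<open>0 < A\<close>]] weighted by linarith
  also have "\<dots> = A * (\<eta> * c + \<beta> * R) + (A * \<beta> * sqrt 2 * sqrt u - c / 2 * u) + A * L2_set e {1..T}"
    by (simp add: algebra_simps)
  also have "\<dots> \<le> A * (\<eta> * c + \<beta> * R + \<beta> * (R + 2 * \<eta>) / 2) + A * L2_set e {1..T}"
    using Young by (simp add: algebra_simps)
  also have "\<dots> \<le> \<beta> * A * ((2 + sqrt 2) * R + 4 * \<eta>) + A * L2_set e {1..T}"
    using mult_left_mono[OF constants less_imp_le[OF \<open>0 < A\<close>]] by (simp add: mult_ac)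
  finally show ?thesis
    unfolding A_def .
qed

theorem lemmaB8:
  fixes X :: "'a::euclidean_space set"
    and F :: "'a \<Rightarrow> 'a"
    and Fh :: "nat \<Rightarrow> 'a"
    and x z :: "nat \<Rightarrow> 'a"
    and \<gamma> :: "nat \<Rightarrow> real"
    and R \<beta> \<eta> :: real and T :: nat
  assumes X_ne: "X \<noteq> {}" and X_closed: "closed X" and X_convex: "convex X"
    and X_bounded: "bounded X"
    and R_diam: "\<forall>u\<in>X. \<forall>v\<in>X. norm (u - v) \<le> R"
    and beta_nonneg: "\<beta> \<ge> 0"
    and smooth: "\<forall>u\<in>X. \<forall>v\<in>X. norm (F u - F v) \<le> \<beta> * norm (u - v)"
    and init: "x 0 = z 0" "z 0 \<in> X"
    and gamma0: "\<gamma> 0 \<ge> 0"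
    and eta_pos: "\<eta> > 0"
    and x_step: "\<forall>t\<in>{1..T}. is_minimizer X
        (\<lambda>u. inner (Fh (t - 1)) u + 1/2 * \<gamma> (t - 1) * (norm (u - z (t - 1)))\<^sup>2) (x t)"
    and gamma_step: "\<forall>t\<in>{1..T}. \<gamma> t =
        (1 / \<eta>) * sqrt (\<eta>\<^sup>2 * (\<gamma> 0)\<^sup>2 + (\<Sum>s=1..t. (norm (Fh s - Fh (s - 1)))\<^sup>2))"
    and z_step: "\<forall>t\<in>{1..T}. is_minimizer X
        (\<lambda>u. inner (Fh t) u + 1/2 * \<gamma> (t - 1) * (norm (u - z (t - 1)))\<^sup>2
              + 1/2 * (\<gamma> t - \<gamma> (t - 1)) * (norm (u - x t))\<^sup>2) (z t)"
  shows "(1/2 * R\<^sup>2 / \<eta> + 2 * \<eta>) * sqrt (\<Sum>t=1..T. (norm (Fh t - Fh (t - 1)))\<^sup>2)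
           - 1/2 * (\<Sum>t=1..T. \<gamma> (t - 1) * ((norm (x t - z (t - 1)))\<^sup>2
                                           + (norm (x (t - 1) - z (t - 1)))\<^sup>2))
         \<le> \<beta> * (1/2 * R\<^sup>2 / \<eta> + 2 * \<eta>) * ((2 + sqrt 2) * R + 4 * \<eta>)
           + (sqrt 2 * R\<^sup>2 / \<eta> + 4 * sqrt 2 * \<eta>)
             * sqrt (\<Sum>t=0..T. (norm (F (x t) - Fh t))\<^sup>2)"
proof -
  define A where "A = 1/2 * R\<^sup>2 / \<eta> + 2 * \<eta>"
  define \<xi> where "\<xi> t = norm (F (x t) - Fh t)" for t
  have "0 \<le> R"
    using R_diam X_ne by fastforce
  have "0 \<le> A"
    using eta_pos by (simp add: A_def)
  have x_in_X: "x t \<in> X" if "t \<le> T" for t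
    using that init x_step unfolding is_minimizer_def by (cases "t = 0") auto
  have "A * L2_set (\<lambda>t. norm (Fh t - Fh (t - 1))) {1..T}
          - 1/2 * (\<Sum>t=1..T. \<gamma> (t - 1) * ((norm (x t - z (t - 1)))\<^sup>2 + (norm (x (t - 1) - z (t - 1)))\<^sup>2))
        \<le> \<beta> * A * ((2 + sqrt 2) * R + 4 * \<eta>) + A * L2_set (\<lambda>t. \<xi> t + \<xi> (t - 1)) {1..T}"
    unfolding A_def
  proof (rule adaptive_stepsize_increment_bound[OF eta_pos beta_nonneg \<open>0 \<le> R\<close> gamma0 gamma_step])
    show "\<forall>t\<in>{1..T}. 0 \<le> norm (Fh t - Fh (t - 1))
        \<and> norm (Fh t - Fh (t - 1)) \<le> \<beta> * norm (x t - x (t - 1)) + (\<xi> t + \<xi> (t - 1))"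
      unfolding \<xi>_def using lipschitz_estimates_diff_le[OF smooth x_in_X x_in_X] by fastforce
    show "\<forall>t\<in>{1..T}. \<bar>norm (x t - x (t - 1))\<bar> \<le> R \<and> (norm (x t - x (t - 1)))\<^sup>2
        \<le> 2 * ((norm (x t - z (t - 1)))\<^sup>2 + (norm (x (t - 1) - z (t - 1)))\<^sup>2)"
      using R_diam x_in_X power2_norm_diff_le by fastforce
  qed
  moreover have "A * L2_set (\<lambda>t. \<xi> t + \<xi> (t - 1)) {1..T} \<le> sqrt 2 * (2 * A * L2_set \<xi> {0..T})"
    using mult_left_mono[OF L2_set_add_shift_le[of \<xi> T] \<open>0 \<le> A\<close>] \<open>0 \<le> A\<close>
      mult_right_mono[of 1 "sqrt 2" "2 * A * L2_set \<xi> {0..T}"]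
    by (simp add: mult_ac)
  ultimately show ?thesis
    unfolding L2_set_def \<xi>_def A_def by (simp add: algebra_simps)
qed

end
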